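(* Every effective Bonnet Myers sharp graph is reflective. That is: if $G=(V,E)$ is a finite, simple, connected graph with $K:=\min_{x\sim y}\kappa(x,y)>0$ and $\operatorname{diam}_{\operatorname{eff}}(G)=\frac{\max_v\operatorname{Deg}(v)}{K}$, then $G$ is reflective.
   Context: $d$ is the combinatorial distance, $\operatorname{Deg}$ the degree, $\operatorname{diam}_{\operatorname{eff}}(G)=\frac{1}{|V|^2}\sum_{x,y}d(x,y)$. Laplacian $\Delta f(x)=\sum_{y\sim x}(f(y)-f(x))$. Ollivier curvature: $\kappa(x,y)=\inf\{\Delta f(x)-\Delta f(y): f(y)-f(x)=1,\ \max_{u\sim v}|f(u)-f(v)|=1\}$. For adjacent $x\sim y$ let $V_x^y=\{v: d(v,x)<d(v,y)\}$, $V^{xy}=\{v:d(v,x)=d(v,y)\}$. A reflection from $x$ to $y$ is a graph automorphism $\phi$ with $\phi\circ\phi=\mathrm{id}$, $\phi(x)=y$, such that the edges between $V_x^y$ and $V_y^x$ are exactly $\{\{x',\phi(x')\}:x'\in V_x^y\}$ and $\phi$ fixes $V^{xy}$ pointwise. $G$ is reflective if every edge admits a reflection. *)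

theory Defs
  imports Complex_Main
begin

definition finite_simple_graph :: "'a set \<Rightarrow> ('a \<Rightarrow> 'a \<Rightarrow> bool) \<Rightarrow> bool" where
  "finite_simple_graph V E \<longleftrightarrow> finite V \<and>
     (\<forall>u v. E u v \<longrightarrow> u \<in> V \<and> v \<in> V) \<and>
     (\<forall>u v. E u v \<longrightarrow> E v u) \<and> (\<forall>u. \<not> E u u)"

inductive walk :: "('a \<Rightarrow> 'a \<Rightarrow> bool) \<Rightarrow> nat \<Rightarrow> 'a \<Rightarrow> 'a \<Rightarrow> bool" for E where
  walk0: "walk E 0 x x"
| walkS: "E x z \<Longrightarrow> walk E n z y \<Longrightarrow> walk E (Suc n) x y"

definition connected_graph :: "'a set \<Rightarrow> ('a \<Rightarrow> 'a \<Rightarrow> bool) \<Rightarrow> bool" where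
  "connected_graph V E \<longleftrightarrow> (\<forall>x\<in>V. \<forall>y\<in>V. \<exists>n. walk E n x y)"

definition gdist :: "('a \<Rightarrow> 'a \<Rightarrow> bool) \<Rightarrow> 'a \<Rightarrow> 'a \<Rightarrow> nat" where
  "gdist E x y = (LEAST n. walk E n x y)"

definition Deg :: "'a set \<Rightarrow> ('a \<Rightarrow> 'a \<Rightarrow> bool) \<Rightarrow> 'a \<Rightarrow> nat" where
  "Deg V E x = card {y \<in> V. E x y}"

definition max_deg :: "'a set \<Rightarrow> ('a \<Rightarrow> 'a \<Rightarrow> bool) \<Rightarrow> nat" where
  "max_deg V E = Max (Deg V E ` V)"

definition diam_eff :: "'a set \<Rightarrow> ('a \<Rightarrow> 'a \<Rightarrow> bool) \<Rightarrow> real" where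
  "diam_eff V E = (\<Sum>x\<in>V. \<Sum>y\<in>V. real (gdist E x y)) / (real (card V))^2"

definition laplacian :: "'a set \<Rightarrow> ('a \<Rightarrow> 'a \<Rightarrow> bool) \<Rightarrow> ('a \<Rightarrow> real) \<Rightarrow> 'a \<Rightarrow> real" where
  "laplacian V E f x = (\<Sum>y\<in>{y \<in> V. E x y}. f y - f x)"

text \<open>Ollivier curvature (Lin--Lu--Yau / Muench--Wojciechowski formulation).\<close>
definition ollivier :: "'a set \<Rightarrow> ('a \<Rightarrow> 'a \<Rightarrow> bool) \<Rightarrow> 'a \<Rightarrow> 'a \<Rightarrow> real" where
  "ollivier V E x y = Inf {laplacian V E f x - laplacian V E f y | f.
      f y - f x = 1 \<and> Max {\<bar>f u - f v\<bar> | u v. u \<in> V \<and> v \<in> V \<and> E u v} = 1}"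

definition min_curv :: "'a set \<Rightarrow> ('a \<Rightarrow> 'a \<Rightarrow> bool) \<Rightarrow> real" where
  "min_curv V E = Min {ollivier V E x y | x y. x \<in> V \<and> y \<in> V \<and> E x y}"

definition closer :: "'a set \<Rightarrow> ('a \<Rightarrow> 'a \<Rightarrow> bool) \<Rightarrow> 'a \<Rightarrow> 'a \<Rightarrow> 'a set" where
  "closer V E x y = {v \<in> V. gdist E v x < gdist E v y}"

definition equidist :: "'a set \<Rightarrow> ('a \<Rightarrow> 'a \<Rightarrow> bool) \<Rightarrow> 'a \<Rightarrow> 'a \<Rightarrow> 'a set" where
  "equidist V E x y = {v \<in> V. gdist E v x = gdist E v y}"

definition automorphism :: "'a set \<Rightarrow> ('a \<Rightarrow> 'a \<Rightarrow> bool) \<Rightarrow> ('a \<Rightarrow> 'a) \<Rightarrow> bool" where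
  "automorphism V E \<phi> \<longleftrightarrow> bij_betw \<phi> V V \<and>
     (\<forall>u\<in>V. \<forall>v\<in>V. E u v \<longleftrightarrow> E (\<phi> u) (\<phi> v))"

definition reflection :: "'a set \<Rightarrow> ('a \<Rightarrow> 'a \<Rightarrow> bool) \<Rightarrow> 'a \<Rightarrow> 'a \<Rightarrow> ('a \<Rightarrow> 'a) \<Rightarrow> bool" where
  "reflection V E x y \<phi> \<longleftrightarrow> automorphism V E \<phi> \<and>
     (\<forall>v\<in>V. \<phi> (\<phi> v) = v) \<and> \<phi> x = y \<and>
     {{u, w} | u w. u \<in> closer V E x y \<and> w \<in> closer V E y x \<and> E u w}
       = {{x', \<phi> x'} | x'. x' \<in> closer V E x y} \<and>
     (\<forall>v\<in>equidist V E x y. \<phi> v = v)"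

definition reflective :: "'a set \<Rightarrow> ('a \<Rightarrow> 'a \<Rightarrow> bool) \<Rightarrow> bool" where
  "reflective V E \<longleftrightarrow> (\<forall>x y. E x y \<longrightarrow> (\<exists>\<phi>. reflection V E x y \<phi>))"

end

theory Submission
  imports Defs
begin

text \<open>
  Telescoping the curvature bound along geodesics gives K d(x,y) \<le> Deg x - \<Delta>d_x(y); summed over
  all pairs this is the Bonnet--Myers estimate for the effective diameter, so sharpness forces
  D-regularity and \<Delta>d_x(y) = D - K d(x,y) for all x, y.
  Comparing these Laplacians across an edge pq shows that the neighbours of p at distance 2 from q
  and those of q at distance 2 from p both number 1 + D - K, and testing the curvature bound with
  min(d_S - 1, d_X) verifies Hall's condition between them, so they are perfectly matched by
  edges. Counting then forces every distance function d_v to change along each matching edge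
  zw exactly as along pq, hence zw and pq separate the graph into the same two halves. Propagating
  this through the half-space of an edge xy, every vertex of either half has a unique neighbour in
  the other; swapping these partners while fixing the equidistant vertices is the reflection.
\<close>

lemma walk_append: "walk E n x y \<Longrightarrow> walk E m y z \<Longrightarrow> walk E (n + m) x z"
  by (induction rule: walk.induct) (auto intro: walk.intros)

lemma walk_rev:
  assumes "\<And>u v. E u v \<Longrightarrow> E v u" and "walk E n x y"
  shows "walk E n y x"
  using assms(2)
proof (induction rule: walk.induct)
  case (walkS x z n y)
  have "walk E 1 z x" using assms(1)[OF walkS(1)] by (auto intro: walk.intros)
  from walk_append[OF walkS(3) this] show ?case by simp
qed (rule walk0)

lemma walk_0_iff: "walk E 0 x y \<longleftrightarrow> x = y"
  by (auto elim: walk.cases intro: walk0)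

lemma walk_Suc_0_iff: "walk E (Suc 0) x y \<longleftrightarrow> E x y"
  by (auto elim: walk.cases simp: walk_0_iff intro: walk.intros)

subsection \<open>Hall's marriage theorem\<close>

definition saturating_matching :: "('a \<Rightarrow> 'b \<Rightarrow> bool) \<Rightarrow> 'a set \<Rightarrow> 'b set \<Rightarrow> ('a \<Rightarrow> 'b) \<Rightarrow> bool"
  where "saturating_matching R X Y \<sigma> \<longleftrightarrow> inj_on \<sigma> X \<and> (\<forall>x\<in>X. \<sigma> x \<in> Y \<and> R x (\<sigma> x))"

definition hall_condition :: "('a \<Rightarrow> 'b \<Rightarrow> bool) \<Rightarrow> 'a set \<Rightarrow> 'b set \<Rightarrow> bool"
  where "hall_condition R X Y \<longleftrightarrow> (\<forall>S\<subseteq>X. card S \<le> card {y\<in>Y. \<exists>x\<in>S. R x y})"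

lemma saturating_matching_glue:
  assumes "saturating_matching R S Y\<^sub>1 \<sigma>\<^sub>1" and "saturating_matching R (X - S) Y\<^sub>2 \<sigma>\<^sub>2"
    and "Y\<^sub>1 \<inter> Y\<^sub>2 = {}" and "S \<subseteq> X"
  shows "saturating_matching R X (Y\<^sub>1 \<union> Y\<^sub>2) (\<lambda>x. if x \<in> S then \<sigma>\<^sub>1 x else \<sigma>\<^sub>2 x)"
proof -
  define \<sigma> where "\<sigma> x = (if x \<in> S then \<sigma>\<^sub>1 x else \<sigma>\<^sub>2 x)" for x
  have m1: "inj_on \<sigma>\<^sub>1 S" "\<And>x. x \<in> S \<Longrightarrow> \<sigma>\<^sub>1 x \<in> Y\<^sub>1 \<and> R x (\<sigma>\<^sub>1 x)"
    and m2: "inj_on \<sigma>\<^sub>2 (X - S)" "\<And>x. x \<in> X - S \<Longrightarrow> \<sigma>\<^sub>2 x \<in> Y\<^sub>2 \<and> R x (\<sigma>\<^sub>2 x)"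
    using assms(1,2) unfolding saturating_matching_def by auto
  have "inj_on \<sigma> X"
  proof (rule inj_onI)
    fix a b assume a: "a \<in> X" and b: "b \<in> X" and eq: "\<sigma> a = \<sigma> b"
    consider "a \<in> S" "b \<in> S" | "a \<in> X - S" "b \<in> X - S" | "a \<in> S" "b \<in> X - S" | "a \<in> X - S" "b \<in> S"
      using a b by blast
    then show "a = b"
    proof cases
      case 1 then show ?thesis using eq m1(1) by (simp add: \<sigma>_def inj_on_def)
    next
      case 2 then show ?thesis using eq m2(1) by (simp add: \<sigma>_def inj_on_def)
    next
      case 3 then show ?thesis using eq m1(2)[of a] m2(2)[of b] assms(3) by (auto simp: \<sigma>_def)
    next
      case 4 then show ?thesis using eq m1(2)[of b] m2(2)[of a] assms(3) by (auto simp: \<sigma>_def)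
    qed
  qed
  moreover have "\<sigma> x \<in> Y\<^sub>1 \<union> Y\<^sub>2 \<and> R x (\<sigma> x)" if "x \<in> X" for x
    using m1(2) m2(2) that by (auto simp: \<sigma>_def)
  ultimately show ?thesis unfolding saturating_matching_def \<sigma>_def by blast
qed

lemma hall_condition_mono:
  "hall_condition R X Y \<Longrightarrow> S \<subseteq> X \<Longrightarrow> hall_condition R S Y"
  unfolding hall_condition_def by auto

lemma hall_condition_remove_tight:
  assumes hall: "hall_condition R X Y" and "finite X" "finite Y" and "S \<subseteq> X"
    and tight: "card S = card {y\<in>Y. \<exists>x\<in>S. R x y}"
  shows "hall_condition R (X - S) (Y - {y\<in>Y. \<exists>x\<in>S. R x y})"
  unfolding hall_condition_def
proof (intro allI impI)
  fix T assume T: "T \<subseteq> X - S"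
  define NS where "NS = {y\<in>Y. \<exists>x\<in>S. R x y}"
  define NT where "NT = {y\<in>Y - NS. \<exists>x\<in>T. R x y}"
  have "T \<union> S \<subseteq> X" using T \<open>S \<subseteq> X\<close> by blast
  have "card T + card S = card (T \<union> S)"
    using T \<open>S \<subseteq> X\<close> \<open>finite X\<close> by (intro card_Un_disjoint[symmetric]) (auto intro: finite_subset)
  also have "\<dots> \<le> card {y\<in>Y. \<exists>x\<in>T \<union> S. R x y}"
    using hall \<open>T \<union> S \<subseteq> X\<close> unfolding hall_condition_def by blast
  also have "{y\<in>Y. \<exists>x\<in>T \<union> S. R x y} = NT \<union> NS" unfolding NS_def NT_def by blast
  also have "card (NT \<union> NS) = card NT + card NS"
    using \<open>finite Y\<close> by (intro card_Un_disjoint) (auto simp: NS_def NT_def)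
  finally show "card T \<le> card NT" using tight unfolding NS_def by linarith
qed

lemma hall_condition_remove_loose:
  assumes hall: "hall_condition R X Y" and "finite Y" and "x\<^sub>0 \<in> X"
    and loose: "\<And>S. S \<subseteq> X \<Longrightarrow> S \<noteq> {} \<Longrightarrow> S \<noteq> X \<Longrightarrow> card S \<noteq> card {y\<in>Y. \<exists>x\<in>S. R x y}"
  shows "hall_condition R (X - {x\<^sub>0}) (Y - {y\<^sub>0})"
  unfolding hall_condition_def
proof (intro allI impI)
  fix T assume T: "T \<subseteq> X - {x\<^sub>0}"
  show "card T \<le> card {y\<in>Y - {y\<^sub>0}. \<exists>x\<in>T. R x y}"
  proof (cases "T = {}")
    case False
    moreover have "T \<subseteq> X" "T \<noteq> X" using T \<open>x\<^sub>0 \<in> X\<close> by auto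
    ultimately have "card T < card {y\<in>Y. \<exists>x\<in>T. R x y}"
      using hall loose[of T] unfolding hall_condition_def by (simp add: le_neq_implies_less)
    moreover have "{y\<in>Y - {y\<^sub>0}. \<exists>x\<in>T. R x y} = {y\<in>Y. \<exists>x\<in>T. R x y} - {y\<^sub>0}" by blast
    ultimately show ?thesis by (force simp: card_Diff_singleton_if)
  qed simp
qed

theorem hall_marriage:
  assumes "finite X" and "finite Y" and "hall_condition R X Y"
  shows "\<exists>\<sigma>. saturating_matching R X Y \<sigma>"
  using assms
proof (induction "card X" arbitrary: X Y rule: less_induct)
  case less
  note finite = less.prems(1,2) and hall = less.prems(3)
  show ?case
  proof (cases "\<exists>S. S \<subseteq> X \<and> S \<noteq> {} \<and> S \<noteq> X \<and> card S = card {y\<in>Y. \<exists>x\<in>S. R x y}")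
    case True
    then obtain S where S: "S \<subseteq> X" "S \<noteq> {}" "S \<noteq> X"
      and tight: "card S = card {y\<in>Y. \<exists>x\<in>S. R x y}" by blast
    define NS where "NS = {y\<in>Y. \<exists>x\<in>S. R x y}"
    have "finite S" using S(1) finite(1) by (rule finite_subset)
    have "card S < card X" using S(1,3) finite(1) by (simp add: psubset_card_mono)
    obtain \<sigma>\<^sub>1 where "saturating_matching R S Y \<sigma>\<^sub>1"
      using less.hyps[OF \<open>card S < card X\<close> \<open>finite S\<close> finite(2)] hall_condition_mono[OF hall S(1)]
      by blast
    then have \<sigma>\<^sub>1: "saturating_matching R S NS \<sigma>\<^sub>1"
      unfolding saturating_matching_def NS_def by blast
    have "card (X - S) < card X"
      using S(1,2) finite(1) by (intro psubset_card_mono) blast+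
    then obtain \<sigma>\<^sub>2 where \<sigma>\<^sub>2: "saturating_matching R (X - S) (Y - NS) \<sigma>\<^sub>2"
      using less.hyps[of "X - S" "Y - NS"] hall_condition_remove_tight[OF hall finite S(1) tight] finite
      unfolding NS_def by blast
    have "NS \<union> (Y - NS) = Y" unfolding NS_def by blast
    then show ?thesis using saturating_matching_glue[OF \<sigma>\<^sub>1 \<sigma>\<^sub>2 _ S(1)] by auto
  next
    case loose: False
    show ?thesis
    proof (cases "X = {}")
      case True then show ?thesis unfolding saturating_matching_def by simp
    next
      case False
      then obtain x\<^sub>0 where "x\<^sub>0 \<in> X" by blast
      then have "card {x\<^sub>0} \<le> card {y\<in>Y. \<exists>x\<in>{x\<^sub>0}. R x y}"
        using hall unfolding hall_condition_def by blast
      then have "{y\<in>Y. \<exists>x\<in>{x\<^sub>0}. R x y} \<noteq> {}" by (auto simp: Suc_le_eq card_gt_0_iff)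
      then obtain y\<^sub>0 where y\<^sub>0: "y\<^sub>0 \<in> Y" "R x\<^sub>0 y\<^sub>0" by blast
      have \<sigma>\<^sub>1: "saturating_matching R {x\<^sub>0} {y\<^sub>0} (\<lambda>_. y\<^sub>0)"
        using y\<^sub>0 by (simp add: saturating_matching_def)
      have card_less: "card (X - {x\<^sub>0}) < card X" using finite(1) \<open>x\<^sub>0 \<in> X\<close> by (rule card_Diff1_less)
      have "hall_condition R (X - {x\<^sub>0}) (Y - {y\<^sub>0})"
        using hall_condition_remove_loose[OF hall finite(2) \<open>x\<^sub>0 \<in> X\<close>] loose by auto
      then obtain \<sigma>\<^sub>2 where \<sigma>\<^sub>2: "saturating_matching R (X - {x\<^sub>0}) (Y - {y\<^sub>0}) \<sigma>\<^sub>2"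
        using less.hyps[OF card_less] finite by blast
      have "saturating_matching R X ({y\<^sub>0} \<union> (Y - {y\<^sub>0})) (\<lambda>x. if x \<in> {x\<^sub>0} then y\<^sub>0 else \<sigma>\<^sub>2 x)"
        using \<open>x\<^sub>0 \<in> X\<close> by (intro saturating_matching_glue[OF \<sigma>\<^sub>1 \<sigma>\<^sub>2]) auto
      moreover have "{y\<^sub>0} \<union> (Y - {y\<^sub>0}) = Y" using y\<^sub>0(1) by blast
      ultimately show ?thesis by auto
    qed
  qed
qed

lemma eq_unit_if_sum_eq_card_mult:
  fixes a :: "'b \<Rightarrow> real"
  assumes "finite X" and bound: "\<And>z. z \<in> X \<Longrightarrow> \<bar>a z\<bar> \<le> 1" and "\<bar>c\<bar> = 1"
    and sum: "(\<Sum>z\<in>X. a z) = real (card X) * c" and "z \<in> X"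
  shows "a z = c"
proof -
  have cc: "c * c = 1" using \<open>\<bar>c\<bar> = 1\<close> abs_mult_self_eq[of c] by simp
  have le_1: "c * a z \<le> 1" if "z \<in> X" for z
  proof -
    have "\<bar>c * a z\<bar> \<le> 1" using bound[OF that] \<open>\<bar>c\<bar> = 1\<close> by (simp add: abs_mult)
    then show ?thesis by (rule abs_le_D1)
  qed
  have "(\<Sum>z\<in>X. c * a z) = c * (real (card X) * c)" by (simp add: sum_distrib_left[symmetric] sum)
  also have "\<dots> = real (card X) * (c * c)" by (rule mult.left_commute)
  finally have "(\<Sum>z\<in>X. 1 - c * a z) = 0" using cc by (simp add: sum_subtractf)
  moreover have "(\<Sum>z\<in>X. 1 - c * a z) = 0 \<longleftrightarrow> (\<forall>z\<in>X. 1 - c * a z = 0)"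
    using le_1 by (intro sum_nonneg_eq_0_iff[OF \<open>finite X\<close>]) simp
  ultimately have "c * a z = 1" using \<open>z \<in> X\<close> by simp
  have "a z = c * (c * a z)" using cc by (simp add: mult.assoc[symmetric])
  also have "\<dots> = c" using \<open>c * a z = 1\<close> by simp
  finally show ?thesis .
qed

definition lipschitz1 :: "('a \<Rightarrow> 'a \<Rightarrow> bool) \<Rightarrow> ('a \<Rightarrow> real) \<Rightarrow> bool"
  where "lipschitz1 E f \<longleftrightarrow> (\<forall>u v. E u v \<longrightarrow> \<bar>f u - f v\<bar> \<le> 1)"

lemma lipschitz1_min:
  assumes "lipschitz1 E f" and "lipschitz1 E g"
  shows "lipschitz1 E (\<lambda>u. min (f u) (g u))"
  unfolding lipschitz1_def
proof (intro allI impI)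
  fix u v assume "E u v"
  then have "\<bar>f u - f v\<bar> \<le> 1" "\<bar>g u - g v\<bar> \<le> 1" using assms unfolding lipschitz1_def by auto
  then show "\<bar>min (f u) (g u) - min (f v) (g v)\<bar> \<le> 1" by (auto simp: min_def abs_le_iff)
qed

lemma gdist_le_walk: "walk E n x y \<Longrightarrow> gdist E x y \<le> n"
  unfolding gdist_def by (rule Least_le)

lemma closer_disjoint: "closer V E x y \<inter> closer V E y x = {}"
  unfolding closer_def by auto

locale finite_connected_graph =
  fixes V :: "'a set" and E :: "'a \<Rightarrow> 'a \<Rightarrow> bool"
  assumes simple: "finite_simple_graph V E"
    and connected: "connected_graph V E"
begin

lemma finite_V: "finite V"
  and edge_in_V: "E u v \<Longrightarrow> u \<in> V" "E u v \<Longrightarrow> v \<in> V"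
  and edge_sym: "E u v \<Longrightarrow> E v u"
  and edge_irrefl: "\<not> E u u"
  using simple unfolding finite_simple_graph_def by auto

definition nbrs :: "'a \<Rightarrow> 'a set" where "nbrs u = {w \<in> V. E u w}"

lemma finite_nbrs: "finite (nbrs u)"
  using finite_V unfolding nbrs_def by simp

lemma Deg_eq_card_nbrs: "Deg V E u = card (nbrs u)"
  unfolding Deg_def nbrs_def ..

lemma Deg_le_max_deg: "u \<in> V \<Longrightarrow> Deg V E u \<le> max_deg V E"
  unfolding max_deg_def using finite_V by simp

lemma walk_gdist: "x \<in> V \<Longrightarrow> y \<in> V \<Longrightarrow> walk E (gdist E x y) x y"
  using connected unfolding connected_graph_def gdist_def by (meson LeastI_ex)

lemma gdist_commute: "gdist E x y = gdist E y x"
proof -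
  have "walk E n x y \<longleftrightarrow> walk E n y x" for n
    using walk_rev[of E] edge_sym by blast
  then show ?thesis unfolding gdist_def by simp
qed

lemma gdist_self [simp]: "gdist E x x = 0"
  using gdist_le_walk[OF walk0] by simp

lemma gdist_eq_0_iff: "x \<in> V \<Longrightarrow> y \<in> V \<Longrightarrow> gdist E x y = 0 \<longleftrightarrow> x = y"
  using walk_gdist[of x y] by (auto simp: walk_0_iff)

lemma gdist_eq_1_iff: "x \<in> V \<Longrightarrow> y \<in> V \<Longrightarrow> gdist E x y = 1 \<longleftrightarrow> E x y"
proof
  assume "x \<in> V" "y \<in> V" "gdist E x y = 1"
  then show "E x y" using walk_gdist[of x y] by (simp add: walk_Suc_0_iff)
next
  assume "x \<in> V" "y \<in> V" "E x y"
  then have "gdist E x y \<le> 1" and "x \<noteq> y"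
    using gdist_le_walk[of E 1 x y] edge_irrefl by (auto simp: walk_Suc_0_iff)
  with \<open>x \<in> V\<close> \<open>y \<in> V\<close> show "gdist E x y = 1" using gdist_eq_0_iff[of x y] by simp
qed

lemma gdist_edge: "E x y \<Longrightarrow> gdist E x y = 1"
  using gdist_eq_1_iff edge_in_V by blast

lemma gdist_triangle: "x \<in> V \<Longrightarrow> y \<in> V \<Longrightarrow> z \<in> V \<Longrightarrow> gdist E x z \<le> gdist E x y + gdist E y z"
  using gdist_le_walk[OF walk_append[OF walk_gdist walk_gdist]] by blast

lemma gdist_edge_le: "E a b \<Longrightarrow> v \<in> V \<Longrightarrow> gdist E v b \<le> gdist E v a + 1"
  using gdist_triangle[of v a b] gdist_edge[of a b] edge_in_V[of a b] by simp

lemma lipschitz1_of_edge_le: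
  assumes "\<And>a b. E a b \<Longrightarrow> f b \<le> f a + 1"
  shows "lipschitz1 E (\<lambda>w. real (f w))"
  unfolding lipschitz1_def
proof (intro allI impI)
  fix a b assume "E a b"
  with assms[of a b] assms[of b a] edge_sym show "\<bar>real (f a) - real (f b)\<bar> \<le> 1" by fastforce
qed

lemma lipschitz1_gdist: "v \<in> V \<Longrightarrow> lipschitz1 E (\<lambda>w. real (gdist E v w))"
  by (rule lipschitz1_of_edge_le) (rule gdist_edge_le)

lemma gdist_Suc_step:
  assumes "x \<in> V" "y \<in> V" and "gdist E y x = Suc k"
  shows "\<exists>z. E y z \<and> gdist E z x = k"
proof -
  obtain z where z: "E y z" "walk E k z x"
    using walk_gdist[OF assms(2,1)] assms(3) by (auto elim: walk.cases)
  have "Suc k \<le> gdist E z x + 1"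
    using gdist_edge_le[OF edge_sym[OF z(1)] assms(1)] assms(3) gdist_commute by simp
  with gdist_le_walk[OF z(2)] z(1) show ?thesis by auto
qed

lemma self_in_closer: "E u w \<Longrightarrow> u \<in> closer V E u w"
  unfolding closer_def using gdist_edge edge_in_V by simp

lemma closer_edge_unique:
  assumes "E u w" and "w' \<in> closer V E w u" and "E u w'"
  shows "w' = w"
proof -
  have "gdist E w' w < 1" "w' \<in> V" "w \<in> V"
    using assms gdist_edge[OF edge_sym[OF assms(3)]] unfolding closer_def by (auto intro: edge_in_V)
  then show ?thesis using gdist_eq_0_iff by simp
qed

definition gdist_set :: "'a set \<Rightarrow> 'a \<Rightarrow> nat"
  where "gdist_set S u = Min ((\<lambda>s. gdist E u s) ` S)"

context
  fixes S assumes S_sub: "S \<subseteq> V" and S_ne: "S \<noteq> {}"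
begin

lemma finite_S: "finite S"
  using S_sub finite_V by (rule finite_subset)

lemma gdist_set_le: "s \<in> S \<Longrightarrow> gdist_set S u \<le> gdist E u s"
  unfolding gdist_set_def using finite_S by simp

lemma gdist_set_attained: "\<exists>s\<in>S. gdist_set S u = gdist E u s"
proof -
  have "gdist_set S u \<in> (\<lambda>s. gdist E u s) ` S"
    unfolding gdist_set_def using finite_S S_ne by (intro Min_in) auto
  then show ?thesis by blast
qed

lemma gdist_set_eq_0: "u \<in> S \<Longrightarrow> gdist_set S u = 0"
  using gdist_set_le[of u u] by simp

lemma gdist_set_const: "(\<And>s. s \<in> S \<Longrightarrow> gdist E u s = c) \<Longrightarrow> gdist_set S u = c"
  using gdist_set_attained by force

lemma lipschitz1_gdist_set: "lipschitz1 E (\<lambda>u. real (gdist_set S u))"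
proof (rule lipschitz1_of_edge_le)
  fix a b assume "E a b"
  obtain s where s: "s \<in> S" "gdist_set S a = gdist E a s" using gdist_set_attained by blast
  have "gdist E s b \<le> gdist E s a + 1" using gdist_edge_le[OF \<open>E a b\<close>] s(1) S_sub by blast
  then show "gdist_set S b \<le> gdist_set S a + 1"
    using gdist_set_le[OF s(1), of b] s(2) by (simp add: gdist_commute)
qed

lemma gdist_set_ge_1:
  assumes "u \<in> V - S"
  shows "gdist_set S u \<ge> 1"
proof -
  obtain s where s: "s \<in> S" "gdist_set S u = gdist E u s" using gdist_set_attained by blast
  with assms S_sub have "gdist E u s \<noteq> 0" using gdist_eq_0_iff[of u s] by blast
  then show ?thesis using s(2) by simp
qed

lemma gdist_set_ge_2:
  assumes "u \<in> V - S" and "\<And>s. s \<in> S \<Longrightarrow> \<not> E u s"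
  shows "gdist_set S u \<ge> 2"
proof -
  obtain s where s: "s \<in> S" "gdist_set S u = gdist E u s" using gdist_set_attained by blast
  with assms S_sub have "gdist E u s \<noteq> 0" "gdist E u s \<noteq> 1"
    using gdist_eq_0_iff[of u s] gdist_eq_1_iff[of u s] by blast+
  then show ?thesis using s(2) by simp
qed

end

lemma laplacian_eq: "laplacian V E f x = (\<Sum>y\<in>nbrs x. f y) - real (Deg V E x) * f x"
  unfolding laplacian_def nbrs_def[symmetric] Deg_eq_card_nbrs by (simp add: sum_subtractf)

lemma sum_laplacian_eq_0: "(\<Sum>x\<in>V. laplacian V E f x) = 0"
proof -
  define h where "h x y = (if E x y then f y - f x else 0)" for x y
  have h_antisym: "h x y = - h y x" for x y
    unfolding h_def using edge_sym by auto
  have "(\<Sum>x\<in>V. laplacian V E f x) = (\<Sum>x\<in>V. \<Sum>y\<in>V. h x y)"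
    unfolding laplacian_def h_def using finite_V by (simp add: sum.inter_filter)
  also have "\<dots> = (\<Sum>y\<in>V. \<Sum>x\<in>V. h x y)" by (rule sum.swap)
  also have "\<dots> = - (\<Sum>y\<in>V. \<Sum>x\<in>V. h y x)"
    unfolding sum_negf[symmetric] by (intro sum.cong refl) (rule h_antisym)
  finally show ?thesis unfolding laplacian_def h_def using finite_V by (simp add: sum.inter_filter)
qed

lemma abs_laplacian_le_Deg:
  assumes "lipschitz1 E f"
  shows "\<bar>laplacian V E f u\<bar> \<le> real (Deg V E u)"
proof -
  have "\<bar>laplacian V E f u\<bar> \<le> (\<Sum>w\<in>nbrs u. \<bar>f w - f u\<bar>)"
    unfolding laplacian_def nbrs_def[symmetric] by (rule sum_abs)
  also have "\<dots> \<le> (\<Sum>w\<in>nbrs u. 1)"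
    using assms edge_sym by (intro sum_mono) (auto simp: lipschitz1_def nbrs_def abs_minus_commute)
  finally show ?thesis by (simp add: Deg_eq_card_nbrs)
qed

lemma laplacian_gdist_self: "laplacian V E (\<lambda>w. real (gdist E x w)) x = real (Deg V E x)"
  unfolding laplacian_eq using gdist_edge by (simp add: nbrs_def Deg_eq_card_nbrs)

lemma finite_edge_image: "finite {F a b | a b. a \<in> V \<and> b \<in> V \<and> E a b}"
proof (rule finite_subset)
  show "{F a b | a b. a \<in> V \<and> b \<in> V \<and> E a b} \<subseteq> (\<lambda>(a, b). F a b) ` (V \<times> V)" by auto
qed (use finite_V in simp)

abbreviation edge_diffs :: "('a \<Rightarrow> real) \<Rightarrow> real set"
  where "edge_diffs f \<equiv> {\<bar>f a - f b\<bar> | a b. a \<in> V \<and> b \<in> V \<and> E a b}"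

lemma lipschitz1_if_Max_edge_diffs: "Max (edge_diffs f) = 1 \<Longrightarrow> lipschitz1 E f"
  unfolding lipschitz1_def
proof (intro allI impI)
  fix a b assume "Max (edge_diffs f) = 1" "E a b"
  then have "\<bar>f a - f b\<bar> \<in> edge_diffs f" using edge_in_V by blast
  with \<open>Max (edge_diffs f) = 1\<close> show "\<bar>f a - f b\<bar> \<le> 1"
    using Max_ge[OF finite_edge_image[of "\<lambda>a b. \<bar>f a - f b\<bar>"]] by simp
qed

lemma Max_edge_diffs_eq_1:
  assumes "lipschitz1 E f" and "E u v" and "\<bar>f u - f v\<bar> = 1"
  shows "Max (edge_diffs f) = 1"
proof (rule Max_eqI[OF finite_edge_image[of "\<lambda>a b. \<bar>f a - f b\<bar>"]])
  show "d \<le> 1" if "d \<in> edge_diffs f" for d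
    using that assms(1) unfolding lipschitz1_def by blast
  show "1 \<in> edge_diffs f" using assms(2,3) edge_in_V[OF assms(2)] by (metis (mono_tags, lifting) mem_Collect_eq)
qed

lemma ollivier_le_laplacian_diff:
  assumes uv: "E u v" and lip: "lipschitz1 E f" and f_uv: "f v - f u = 1"
  shows "ollivier V E u v \<le> laplacian V E f u - laplacian V E f v"
  unfolding ollivier_def
proof (rule cInf_lower)
  have "Max (edge_diffs f) = 1" using Max_edge_diffs_eq_1[OF lip uv] f_uv by simp
  with f_uv show "laplacian V E f u - laplacian V E f v \<in> {laplacian V E g u - laplacian V E g v | g.
      g v - g u = 1 \<and> Max (edge_diffs g) = 1}" by blast
  show "bdd_below {laplacian V E g u - laplacian V E g v | g. g v - g u = 1 \<and> Max (edge_diffs g) = 1}"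
  proof (rule bdd_belowI)
    fix s assume "s \<in> {laplacian V E g u - laplacian V E g v | g. g v - g u = 1 \<and> Max (edge_diffs g) = 1}"
    then obtain g where s: "s = laplacian V E g u - laplacian V E g v" and "Max (edge_diffs g) = 1"
      by blast
    from this(2) have "lipschitz1 E g" by (rule lipschitz1_if_Max_edge_diffs)
    with s show "- real (Deg V E u + Deg V E v) \<le> s"
      using abs_laplacian_le_Deg[of g u] abs_laplacian_le_Deg[of g v] by simp
  qed
qed

lemma min_curv_le_ollivier: "E u v \<Longrightarrow> min_curv V E \<le> ollivier V E u v"
proof -
  assume "E u v"
  then have "ollivier V E u v \<in> {ollivier V E x y | x y. x \<in> V \<and> y \<in> V \<and> E x y}"
    using edge_in_V by blast
  then show ?thesis unfolding min_curv_def using finite_edge_image by (rule Min_le[rotated])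
qed

lemma min_curv_le_laplacian_diff:
  "E u v \<Longrightarrow> lipschitz1 E f \<Longrightarrow> f v - f u = 1 \<Longrightarrow>
    min_curv V E \<le> laplacian V E f u - laplacian V E f v"
  using min_curv_le_ollivier ollivier_le_laplacian_diff by (meson order_trans)

lemma min_curv_mult_gdist_le:
  assumes x: "x \<in> V" and "y \<in> V"
  shows "min_curv V E * gdist E x y \<le> real (Deg V E x) - laplacian V E (\<lambda>w. real (gdist E x w)) y"
proof -
  let ?L = "laplacian V E (\<lambda>w. real (gdist E x w))"
  have "\<forall>y\<in>V. gdist E x y = k \<longrightarrow> min_curv V E * k \<le> ?L x - ?L y" for k
  proof (induction k)
    case 0
    then show ?case using x gdist_eq_0_iff by auto
  next
    case (Suc k)
    show ?case
    proof (intro ballI impI)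
      fix y assume "y \<in> V" and xy: "gdist E x y = Suc k"
      then obtain z where z: "E y z" "gdist E x z = k"
        using gdist_Suc_step[OF x] gdist_commute by metis
      have "min_curv V E \<le> ?L z - ?L y"
        using min_curv_le_laplacian_diff[OF edge_sym[OF z(1)] lipschitz1_gdist[OF x]] xy z(2) by simp
      moreover have "min_curv V E * k \<le> ?L x - ?L z" using Suc.IH edge_in_V(2)[OF z(1)] z(2) by blast
      ultimately show "min_curv V E * Suc k \<le> ?L x - ?L y" by (simp add: algebra_simps)
    qed
  qed
  then show ?thesis using \<open>y \<in> V\<close> laplacian_gdist_self by simp
qed

lemma sum_gdist_eq_diam_eff: "(\<Sum>x\<in>V. \<Sum>y\<in>V. real (gdist E x y)) = diam_eff V E * real (card V)^2"
  using finite_V by (cases "V = {}") (simp_all add: diam_eff_def)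

definition far_nbrs :: "'a \<Rightarrow> 'a \<Rightarrow> 'a set"
  where "far_nbrs p q = {z \<in> V. E p z \<and> z \<noteq> q \<and> \<not> E q z}"

lemma finite_far_nbrs: "finite (far_nbrs p q)"
  using finite_V unfolding far_nbrs_def by simp

lemma far_nbrs_subset: "far_nbrs p q \<subseteq> V"
  unfolding far_nbrs_def by blast

lemma sum_nbrs_split:
  assumes "E p q"
  shows "(\<Sum>w\<in>nbrs p. g w) = g q + (\<Sum>w\<in>nbrs p \<inter> nbrs q. g w) + (\<Sum>w\<in>far_nbrs p q. g w)"
proof -
  define C where "C = nbrs p \<inter> nbrs q"
  have "nbrs p = insert q (C \<union> far_nbrs p q)"
    using assms edge_in_V unfolding C_def nbrs_def far_nbrs_def by auto
  moreover have "q \<notin> C \<union> far_nbrs p q"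
    using edge_irrefl unfolding C_def nbrs_def far_nbrs_def by auto
  moreover have "C \<inter> far_nbrs p q = {}"
    unfolding C_def nbrs_def far_nbrs_def by auto
  moreover have "finite C" unfolding C_def using finite_nbrs by simp
  ultimately show ?thesis
    using finite_far_nbrs unfolding C_def[symmetric] by (simp add: sum.union_disjoint add.assoc)
qed

lemma laplacian_edge_diff:
  assumes "E p q"
  shows "laplacian V E g p - laplacian V E g q
    = (real (Deg V E q) + 1) * g q - (real (Deg V E p) + 1) * g p
      + (\<Sum>w\<in>far_nbrs p q. g w) - (\<Sum>w\<in>far_nbrs q p. g w)"
  using sum_nbrs_split[OF assms, of g] sum_nbrs_split[OF edge_sym[OF assms], of g]
  unfolding laplacian_eq by (simp add: Int_commute algebra_simps)

lemma gdist_far_nbrs: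
  assumes "E p q" and "z \<in> far_nbrs p q"
  shows "gdist E p z = 1" and "gdist E q z = 2"
proof -
  have z: "z \<in> V" "E p z" "z \<noteq> q" "\<not> E q z" using assms(2) unfolding far_nbrs_def by auto
  then show "gdist E p z = 1" by (simp add: gdist_edge)
  have "gdist E q z \<le> 2"
    using gdist_triangle[of q p z] gdist_edge[OF edge_sym[OF assms(1)]] gdist_edge[OF z(2)] z(1)
      edge_in_V[OF assms(1)] by simp
  moreover have "gdist E q z \<noteq> 0" "gdist E q z \<noteq> 1"
    using z edge_in_V[OF assms(1)] gdist_eq_0_iff[of q z] gdist_eq_1_iff[of q z] by auto
  ultimately show "gdist E q z = 2" by linarith
qed

end

subsection \<open>Consequences of sharpness\<close>

locale bonnet_myers_sharp = finite_connected_graph +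
  assumes min_curv_pos: "min_curv V E > 0"
    and diam_eff_eq: "diam_eff V E = real (max_deg V E) / min_curv V E"
begin

abbreviation K :: real where "K \<equiv> min_curv V E"
abbreviation D :: nat where "D \<equiv> max_deg V E"

lemma laplacian_gdist_eq:
  assumes "x \<in> V" "y \<in> V"
  shows "laplacian V E (\<lambda>w. real (gdist E x w)) y = real D - K * real (gdist E x y)"
proof -
  define slack where
    "slack x y = real D - laplacian V E (\<lambda>w. real (gdist E x w)) y - K * real (gdist E x y)" for x y
  have slack_nonneg: "slack x y \<ge> 0" if "x \<in> V" "y \<in> V" for x y
    using min_curv_mult_gdist_le[OF that] Deg_le_max_deg[OF that(1)] unfolding slack_def by linarith
  have "(\<Sum>x\<in>V. \<Sum>y\<in>V. slack x y)
      = real (card V)^2 * real D - (\<Sum>x\<in>V. \<Sum>y\<in>V. laplacian V E (\<lambda>w. real (gdist E x w)) y)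
        - K * (\<Sum>x\<in>V. \<Sum>y\<in>V. real (gdist E x y))"
    unfolding slack_def by (simp add: sum_subtractf sum_distrib_left power2_eq_square)
  also have "\<dots> = 0"
    using min_curv_pos by (simp add: sum_laplacian_eq_0 sum_gdist_eq_diam_eff diam_eff_eq)
  finally have "(\<Sum>x\<in>V. \<Sum>y\<in>V. slack x y) = 0" .
  then have "\<forall>x\<in>V. \<forall>y\<in>V. slack x y = 0"
    using finite_V slack_nonneg by (simp add: sum_nonneg sum_nonneg_eq_0_iff)
  with assms have "slack x y = 0" by blast
  then show ?thesis unfolding slack_def by linarith
qed

lemma Deg_eq_max_deg: "x \<in> V \<Longrightarrow> Deg V E x = D"
  using laplacian_gdist_eq[of x x] laplacian_gdist_self[of x] by simp

lemma laplacian_edge_diff_regular: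
  assumes "E p q"
  shows "laplacian V E g p - laplacian V E g q
    = (1 + real D) * (g q - g p) + (\<Sum>w\<in>far_nbrs p q. g w) - (\<Sum>w\<in>far_nbrs q p. g w)"
  using laplacian_edge_diff[OF assms] Deg_eq_max_deg edge_in_V[OF assms] by (simp add: algebra_simps)

lemma sum_far_nbrs_gdist_diff:
  assumes "E p q" and "v \<in> V"
  shows "(\<Sum>w\<in>far_nbrs q p. real (gdist E v w)) - (\<Sum>w\<in>far_nbrs p q. real (gdist E v w))
     = (1 + real D - K) * (real (gdist E v q) - real (gdist E v p))"
  using laplacian_edge_diff_regular[OF assms(1), of "\<lambda>w. real (gdist E v w)"]
    laplacian_gdist_eq[OF assms(2) edge_in_V(1)[OF assms(1)]]
    laplacian_gdist_eq[OF assms(2) edge_in_V(2)[OF assms(1)]]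
  by (simp add: algebra_simps)

lemma card_far_nbrs:
  assumes "E p q"
  shows "real (card (far_nbrs p q)) = 1 + real D - K"
proof -
  have pq: "E q p" using edge_sym[OF assms] .
  have "2 * real (card (far_nbrs q p)) - real (card (far_nbrs p q)) = 1 + real D - K"
    using sum_far_nbrs_gdist_diff[OF assms edge_in_V(1)[OF assms]]
    by (simp add: gdist_far_nbrs[OF assms] gdist_far_nbrs[OF pq] gdist_edge[OF assms])
  moreover have "real (card (far_nbrs q p)) - 2 * real (card (far_nbrs p q)) = - (1 + real D - K)"
    using sum_far_nbrs_gdist_diff[OF assms edge_in_V(2)[OF assms]]
    by (simp add: gdist_far_nbrs[OF assms] gdist_far_nbrs[OF pq] gdist_edge[OF pq])
  ultimately show ?thesis by linarith
qed

subsection \<open>Matching the far neighbours across an edge\<close>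

lemma sum_far_nbrs_diff_le:
  assumes "E p q" and "lipschitz1 E f" and "f q - f p = 1"
  shows "(\<Sum>w\<in>far_nbrs q p. f w) - (\<Sum>w\<in>far_nbrs p q. f w) \<le> real (card (far_nbrs p q))"
  using min_curv_le_laplacian_diff[OF assms] laplacian_edge_diff_regular[OF assms(1), of f]
    card_far_nbrs[OF assms(1)] assms(3) by simp

lemma card_far_nbrs_commute: "E p q \<Longrightarrow> card (far_nbrs q p) = card (far_nbrs p q)"
  using card_far_nbrs edge_sym by (metis of_nat_eq_iff)

lemma card_le_card_of_test_function:
  assumes pq: "E p q" and S: "S \<subseteq> far_nbrs p q" and N: "N \<subseteq> far_nbrs q p"
    and f: "lipschitz1 E f" "f q - f p = 1"
    and f_S: "\<And>z. z \<in> far_nbrs p q \<Longrightarrow> f z \<le> - of_bool (z \<in> S)"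
    and f_N: "\<And>w. w \<in> far_nbrs q p \<Longrightarrow> f w \<ge> of_bool (w \<notin> N)"
  shows "card S \<le> card N"
proof -
  define X where "X = far_nbrs p q"
  define Y where "Y = far_nbrs q p"
  have "Y \<inter> {w. w \<notin> N} = Y - N" "X \<inter> {z. z \<in> S} = S" using S unfolding X_def by blast+
  then have "real (card (Y - N)) + real (card S)
      = (\<Sum>w\<in>Y. of_bool (w \<notin> N)) - (\<Sum>z\<in>X. - of_bool (z \<in> S))"
    using finite_far_nbrs unfolding X_def Y_def by (simp add: sum_negf)
  also have "\<dots> \<le> (\<Sum>w\<in>Y. f w) - (\<Sum>z\<in>X. f z)"
  proof -
    have "(\<Sum>w\<in>Y. of_bool (w \<notin> N)) \<le> (\<Sum>w\<in>Y. f w)" using f_N unfolding Y_def by (rule sum_mono)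
    moreover have "(\<Sum>z\<in>X. f z) \<le> (\<Sum>z\<in>X. - of_bool (z \<in> S))" using f_S unfolding X_def by (rule sum_mono)
    ultimately show ?thesis by linarith
  qed
  also have "\<dots> \<le> real (card Y)"
    using sum_far_nbrs_diff_le[OF pq f] card_far_nbrs_commute[OF pq] unfolding X_def Y_def by simp
  also have "\<dots> = real (card (Y - N)) + real (card N)"
  proof -
    have "finite N" using N finite_far_nbrs by (rule finite_subset)
    then have "card (Y - N) + card N = card Y"
      using N card_mono[OF finite_far_nbrs N] unfolding Y_def by (simp add: card_Diff_subset)
    then show ?thesis by (metis of_nat_add)
  qed
  finally show ?thesis by simp
qed

lemma hall_condition_far_nbrs:
  assumes pq: "E p q"
  shows "hall_condition E (far_nbrs p q) (far_nbrs q p)"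
  unfolding hall_condition_def
proof (intro allI impI)
  fix S assume S: "S \<subseteq> far_nbrs p q"
  define X where "X = far_nbrs p q"
  define NS where "NS = {w\<in>far_nbrs q p. \<exists>z\<in>S. E z w}"
  show "card S \<le> card NS"
  proof (cases "S = {}")
    case False
    have "X \<noteq> {}" "X \<subseteq> V" "S \<subseteq> V" using S False far_nbrs_subset unfolding X_def by auto
    define f where "f u = min (real (gdist_set S u) - 1) (real (gdist_set X u))" for u
    show ?thesis
    proof (rule card_le_card_of_test_function[OF pq S _ _ _ _ _])
      show "NS \<subseteq> far_nbrs q p" unfolding NS_def by blast
      show "lipschitz1 E f"
        unfolding f_def using lipschitz1_gdist_set[OF \<open>S \<subseteq> V\<close> False] lipschitz1_gdist_set[OF \<open>X \<subseteq> V\<close> \<open>X \<noteq> {}\<close>]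
        by (intro lipschitz1_min) (auto simp: lipschitz1_def)
      have "gdist_set S p = 1"
        by (rule gdist_set_const[OF \<open>S \<subseteq> V\<close> False]) (use S gdist_far_nbrs(1)[OF pq] in blast)
      moreover have "gdist_set X p = 1"
        by (rule gdist_set_const[OF \<open>X \<subseteq> V\<close> \<open>X \<noteq> {}\<close>]) (use gdist_far_nbrs(1)[OF pq] X_def in blast)
      moreover have "gdist_set S q = 2"
        by (rule gdist_set_const[OF \<open>S \<subseteq> V\<close> False]) (use S gdist_far_nbrs(2)[OF pq] in blast)
      moreover have "gdist_set X q = 2"
        by (rule gdist_set_const[OF \<open>X \<subseteq> V\<close> \<open>X \<noteq> {}\<close>]) (use gdist_far_nbrs(2)[OF pq] X_def in blast)
      ultimately show "f q - f p = 1" unfolding f_def by simp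
      show "f z \<le> - of_bool (z \<in> S)" if "z \<in> far_nbrs p q" for z
        using that gdist_set_eq_0[OF \<open>S \<subseteq> V\<close> False] gdist_set_eq_0[OF \<open>X \<subseteq> V\<close> \<open>X \<noteq> {}\<close>]
        unfolding f_def X_def by auto
      show "f w \<ge> of_bool (w \<notin> NS)" if w: "w \<in> far_nbrs q p" for w
      proof -
        have "w \<in> V - S" "w \<in> V - X"
          using w S far_nbrs_subset unfolding X_def by (auto simp: far_nbrs_def)
        then have "gdist_set S w \<ge> 1" "gdist_set X w \<ge> 1"
          using gdist_set_ge_1[OF \<open>S \<subseteq> V\<close> False] gdist_set_ge_1[OF \<open>X \<subseteq> V\<close> \<open>X \<noteq> {}\<close>] by blast+
        moreover have "gdist_set S w \<ge> 2" if "w \<notin> NS"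
        proof (rule gdist_set_ge_2[OF \<open>S \<subseteq> V\<close> False \<open>w \<in> V - S\<close>])
          show "\<not> E w s" if "s \<in> S" for s
            using \<open>w \<notin> NS\<close> w that edge_sym unfolding NS_def by blast
        qed
        ultimately show ?thesis unfolding f_def by (cases "w \<in> NS") (simp_all add: min_def)
      qed
    qed
  qed simp
qed

lemma far_nbrs_matching:
  assumes "E p q"
  obtains \<sigma> where "bij_betw \<sigma> (far_nbrs p q) (far_nbrs q p)" and "\<forall>z\<in>far_nbrs p q. E z (\<sigma> z)"
proof -
  obtain \<sigma> where \<sigma>: "saturating_matching E (far_nbrs p q) (far_nbrs q p) \<sigma>"
    using hall_marriage[OF finite_far_nbrs finite_far_nbrs hall_condition_far_nbrs[OF assms]] by blast
  then have "\<sigma> ` far_nbrs p q \<subseteq> far_nbrs q p" and inj: "inj_on \<sigma> (far_nbrs p q)"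
    unfolding saturating_matching_def by auto
  moreover have "card (\<sigma> ` far_nbrs p q) = card (far_nbrs q p)"
    using card_image[OF inj] card_far_nbrs_commute[OF assms] by simp
  ultimately have "bij_betw \<sigma> (far_nbrs p q) (far_nbrs q p)"
    unfolding bij_betw_def using card_subset_eq[OF finite_far_nbrs] by blast
  with \<sigma> that show thesis unfolding saturating_matching_def by blast
qed

lemma gdist_matching_shift:
  assumes pq: "E p q" and \<sigma>: "bij_betw \<sigma> (far_nbrs p q) (far_nbrs q p)" "\<forall>z\<in>far_nbrs p q. E z (\<sigma> z)"
    and v: "v \<in> V" "gdist E v p \<noteq> gdist E v q" and z: "z \<in> far_nbrs p q"
  shows "real (gdist E v (\<sigma> z)) - real (gdist E v z) = real (gdist E v q) - real (gdist E v p)"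
proof (rule eq_unit_if_sum_eq_card_mult[OF finite_far_nbrs _ _ _ z])
  show "\<bar>real (gdist E v (\<sigma> z)) - real (gdist E v z)\<bar> \<le> 1" if "z \<in> far_nbrs p q" for z
    using lipschitz1_gdist[OF v(1)] \<sigma>(2) that unfolding lipschitz1_def by (simp add: abs_minus_commute)
  show "\<bar>real (gdist E v q) - real (gdist E v p)\<bar> = 1"
    using gdist_edge_le[OF pq v(1)] gdist_edge_le[OF edge_sym[OF pq] v(1)] v(2) by linarith
  have "(\<Sum>z\<in>far_nbrs p q. real (gdist E v (\<sigma> z))) = (\<Sum>w\<in>far_nbrs q p. real (gdist E v w))"
    using sum.reindex_bij_betw[OF \<sigma>(1)] .
  then show "(\<Sum>z\<in>far_nbrs p q. real (gdist E v (\<sigma> z)) - real (gdist E v z))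
      = real (card (far_nbrs p q)) * (real (gdist E v q) - real (gdist E v p))"
    using sum_far_nbrs_gdist_diff[OF pq v(1)] card_far_nbrs[OF pq] by (simp add: sum_subtractf)
qed

lemma closer_subset_of_far_edge:
  assumes pq: "E p q" and z: "z \<in> far_nbrs p q" and w: "w \<in> far_nbrs q p" and zw: "E z w"
  shows "closer V E p q \<subseteq> closer V E z w"
proof -
  obtain \<sigma> where \<sigma>: "bij_betw \<sigma> (far_nbrs p q) (far_nbrs q p)" "\<forall>z\<in>far_nbrs p q. E z (\<sigma> z)"
    using far_nbrs_matching[OF pq] by blast
  note shift = gdist_matching_shift[OF pq \<sigma>]
  have "w \<in> V" "\<sigma> z \<in> V" using w z \<sigma>(1) far_nbrs_subset unfolding bij_betw_def by blast+
  have "gdist E w q = 1" "gdist E w p = 2"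
    using gdist_far_nbrs[OF edge_sym[OF pq] w] by (simp_all add: gdist_commute)
  moreover have "gdist E w z = 1" using gdist_edge[OF edge_sym[OF zw]] .
  ultimately have "gdist E w (\<sigma> z) = 0" using shift[OF \<open>w \<in> V\<close> _ z] by simp
  then have "\<sigma> z = w" using gdist_eq_0_iff[OF \<open>w \<in> V\<close> \<open>\<sigma> z \<in> V\<close>] by simp
  show ?thesis
  proof
    fix v assume "v \<in> closer V E p q"
    then have "v \<in> V" "gdist E v p < gdist E v q" unfolding closer_def by auto
    with shift[of v, OF _ _ z] \<open>\<sigma> z = w\<close> show "v \<in> closer V E z w" unfolding closer_def by simp
  qed
qed

lemma far_nbrs_swap:
  assumes "E p q" and "z \<in> far_nbrs p q" and "w \<in> far_nbrs q p"
  shows "p \<in> far_nbrs z w"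
  using assms edge_in_V edge_sym unfolding far_nbrs_def by blast

lemma closer_eq_of_far_edge:
  assumes pq: "E p q" and z: "z \<in> far_nbrs p q" and w: "w \<in> far_nbrs q p" and zw: "E z w"
  shows "closer V E z w = closer V E p q" and "closer V E w z = closer V E q p"
proof -
  have p: "p \<in> far_nbrs z w" and q: "q \<in> far_nbrs w z"
    using far_nbrs_swap[OF pq z w] far_nbrs_swap[OF edge_sym[OF pq] w z] .
  show "closer V E z w = closer V E p q"
    using closer_subset_of_far_edge[OF pq z w zw] closer_subset_of_far_edge[OF zw p q pq] by blast
  show "closer V E w z = closer V E q p"
    using closer_subset_of_far_edge[OF edge_sym[OF pq] w z edge_sym[OF zw]]
      closer_subset_of_far_edge[OF edge_sym[OF zw] q p edge_sym[OF pq]] by blast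
qed

lemma parallel_edge_exists:
  assumes xy: "E x y" and "p \<in> closer V E x y"
  shows "\<exists>q. E p q \<and> closer V E p q = closer V E x y \<and> closer V E q p = closer V E y x"
proof -
  have "x \<in> V" "y \<in> V" using edge_in_V[OF xy] by auto
  have "\<forall>p\<in>closer V E x y. gdist E p x = k \<longrightarrow>
      (\<exists>q. E p q \<and> closer V E p q = closer V E x y \<and> closer V E q p = closer V E y x)" for k
  proof (induction k)
    case 0
    then show ?case using \<open>x \<in> V\<close> xy gdist_eq_0_iff unfolding closer_def by blast
  next
    case (Suc k)
    show ?case
    proof (intro ballI impI)
      fix p assume p: "p \<in> closer V E x y" "gdist E p x = Suc k"
      then have "p \<in> V" unfolding closer_def by blast
      obtain p' where p': "E p p'" "gdist E p' x = k" using gdist_Suc_step[OF \<open>x \<in> V\<close> \<open>p \<in> V\<close> p(2)] by blast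
      have "p' \<in> V" using edge_in_V(2)[OF p'(1)] .
      have "gdist E p y \<le> gdist E p' y + 1"
        using gdist_edge_le[OF edge_sym[OF p'(1)] \<open>y \<in> V\<close>] by (simp add: gdist_commute)
      then have "p' \<in> closer V E x y" using p p'(2) \<open>p' \<in> V\<close> unfolding closer_def by simp
      with Suc.IH p'(2) obtain q' where q': "E p' q'"
        "closer V E p' q' = closer V E x y" "closer V E q' p' = closer V E y x" by blast
      have "gdist E p p' < gdist E p q'" using p(1) q'(2) unfolding closer_def by blast
      then have "p \<noteq> q'" "\<not> E q' p" using gdist_edge[OF p'(1)] gdist_edge[OF edge_sym] by auto
      then have "p \<in> far_nbrs p' q'" using \<open>p \<in> V\<close> edge_sym[OF p'(1)] unfolding far_nbrs_def by blast
      moreover obtain \<sigma> where "bij_betw \<sigma> (far_nbrs p' q') (far_nbrs q' p')"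
        and "\<forall>z\<in>far_nbrs p' q'. E z (\<sigma> z)"
        using far_nbrs_matching[OF q'(1)] by blast
      ultimately have "\<sigma> p \<in> far_nbrs q' p'" "E p (\<sigma> p)" unfolding bij_betw_def by blast+
      then show "\<exists>q. E p q \<and> closer V E p q = closer V E x y \<and> closer V E q p = closer V E y x"
        using closer_eq_of_far_edge[OF q'(1) \<open>p \<in> far_nbrs p' q'\<close>] q'(2,3) by blast
    qed
  qed
  then show ?thesis using assms(2) by blast
qed

subsection \<open>The reflection\<close>

definition reflect :: "'a \<Rightarrow> 'a \<Rightarrow> 'a \<Rightarrow> 'a" where
  "reflect x y v =
    (if v \<in> closer V E x y then (THE w. w \<in> closer V E y x \<and> E v w)
     else if v \<in> closer V E y x then (THE w. w \<in> closer V E x y \<and> E v w)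
     else v)"

lemma reflect_commute: "reflect x y = reflect y x"
  using closer_disjoint unfolding reflect_def by fastforce

lemma reflect_outside: "v \<notin> closer V E x y \<Longrightarrow> v \<notin> closer V E y x \<Longrightarrow> reflect x y v = v"
  unfolding reflect_def by simp

lemma reflect_eqI:
  assumes xy: "E x y" and v: "v \<in> closer V E x y" and w: "w \<in> closer V E y x" and "E v w"
  shows "reflect x y v = w"
proof -
  obtain q where q: "E v q" "closer V E v q = closer V E x y" "closer V E q v = closer V E y x"
    using parallel_edge_exists[OF xy v] by blast
  have "w' = q" if "w' \<in> closer V E y x" "E v w'" for w'
    using closer_edge_unique[OF q(1)] q(3) that by blast
  then have "(THE w. w \<in> closer V E y x \<and> E v w) = w"
    using w \<open>E v w\<close> by (intro the_equality) blast+
  then show ?thesis using v unfolding reflect_def by simp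
qed

lemma reflect_closer:
  assumes xy: "E x y" and v: "v \<in> closer V E x y"
  shows "reflect x y v \<in> closer V E y x" and "E v (reflect x y v)"
    and "closer V E v (reflect x y v) = closer V E x y" and "closer V E (reflect x y v) v = closer V E y x"
proof -
  obtain q where q: "E v q" "closer V E v q = closer V E x y" "closer V E q v = closer V E y x"
    using parallel_edge_exists[OF xy v] by blast
  have "q \<in> closer V E y x" using self_in_closer[OF edge_sym[OF q(1)]] q(3) by simp
  then have "reflect x y v = q" using reflect_eqI[OF xy v _ q(1)] by blast
  with q \<open>q \<in> closer V E y x\<close> show "reflect x y v \<in> closer V E y x" "E v (reflect x y v)"
    "closer V E v (reflect x y v) = closer V E x y" "closer V E (reflect x y v) v = closer V E y x"
    by simp_all
qed

lemma reflect_reflect: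
  assumes xy: "E x y"
  shows "reflect x y (reflect x y v) = v"
proof -
  have swap: "reflect x y (reflect x y v) = v" if "E x y" "v \<in> closer V E x y" for x y v
    using reflect_eqI[OF edge_sym[OF that(1)] reflect_closer(1)[OF that] that(2)]
      reflect_closer(2)[OF that] edge_sym reflect_commute by metis
  show ?thesis
    using swap[OF xy] swap[OF edge_sym[OF xy]] reflect_commute reflect_outside by metis
qed

lemma reflect_in_V: "E x y \<Longrightarrow> v \<in> V \<Longrightarrow> reflect x y v \<in> V"
  using reflect_closer(1) reflect_commute reflect_outside edge_sym
  unfolding closer_def by (metis (no_types, lifting) mem_Collect_eq)

lemma reflect_edge_from_closer:
  assumes xy: "E x y" and u: "u \<in> closer V E x y" and uv: "E u v"
  shows "E (reflect x y u) (reflect x y v)"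
proof -
  note ru = reflect_closer[OF xy u]
  have "v \<in> V" using edge_in_V(2)[OF uv] .
  consider "v \<in> closer V E y x" | "v \<notin> closer V E x y" "v \<notin> closer V E y x" | "v \<in> closer V E x y"
    by blast
  then show ?thesis
  proof cases
    case 1
    then show ?thesis using reflect_eqI[OF xy u 1 uv] reflect_reflect[OF xy, of u] edge_sym[OF uv] by simp
  next
    case 2
    then have "v \<notin> closer V E u (reflect x y u)" "v \<notin> closer V E (reflect x y u) u"
      using ru(3,4) by simp_all
    then have "gdist E v (reflect x y u) = gdist E v u"
      using \<open>v \<in> V\<close> unfolding closer_def by auto
    then have "E v (reflect x y u)"
      using gdist_edge[OF edge_sym[OF uv]] gdist_eq_1_iff \<open>v \<in> V\<close> reflect_in_V[OF xy] edge_in_V(1)[OF uv] by simp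
    then show ?thesis using reflect_outside[OF 2] edge_sym by simp
  next
    case 3
    let ?ru = "reflect x y u" and ?rv = "reflect x y v"
    have "?ru \<in> V" "?rv \<in> V" using reflect_in_V[OF xy] \<open>v \<in> V\<close> edge_in_V(1)[OF uv] by auto
    have "gdist E ?rv ?ru < gdist E ?rv u"
      using reflect_closer(1)[OF xy 3] ru(4) unfolding closer_def by blast
    also have "\<dots> \<le> gdist E ?rv v + gdist E v u"
      using gdist_triangle \<open>?rv \<in> V\<close> \<open>v \<in> V\<close> edge_in_V(1)[OF uv] by blast
    also have "\<dots> = 2"
      using reflect_closer(2)[OF xy 3] gdist_edge edge_sym uv by (simp add: gdist_commute[of _ v])
    finally have "gdist E ?rv ?ru \<le> 1" by simp
    moreover have "?rv \<noteq> ?ru" using reflect_reflect[OF xy] edge_irrefl uv by metis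
    ultimately have "gdist E ?rv ?ru = 1"
      using gdist_eq_0_iff[OF \<open>?rv \<in> V\<close> \<open>?ru \<in> V\<close>] by linarith
    then show ?thesis using gdist_eq_1_iff \<open>?rv \<in> V\<close> \<open>?ru \<in> V\<close> edge_sym by blast
  qed
qed

lemma reflect_edge:
  assumes xy: "E x y" and uv: "E u v"
  shows "E (reflect x y u) (reflect x y v)"
proof -
  have "E (reflect x y a) (reflect x y b)" if "E a b" "a \<in> closer V E x y \<union> closer V E y x" for a b
    using reflect_edge_from_closer[OF xy _ that(1)] reflect_edge_from_closer[OF edge_sym[OF xy] _ that(1)]
      reflect_commute that(2) by auto
  then show ?thesis
    using uv edge_sym reflect_outside by (metis UnCI)
qed

lemma reflection_reflect:
  assumes xy: "E x y"
  shows "reflection V E x y (reflect x y)"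
  unfolding reflection_def automorphism_def
proof (intro conjI ballI)
  show "bij_betw (reflect x y) V V"
    by (rule bij_betw_byWitness[where f' = "reflect x y"]) (auto simp: reflect_reflect[OF xy] reflect_in_V[OF xy])
  show "E u v = E (reflect x y u) (reflect x y v)" for u v
    using reflect_edge[OF xy, of u v] reflect_edge[OF xy, of "reflect x y u" "reflect x y v"]
    by (auto simp: reflect_reflect[OF xy])
  show "reflect x y (reflect x y v) = v" for v by (rule reflect_reflect[OF xy])
  show "reflect x y x = y"
    using reflect_eqI[OF xy self_in_closer[OF xy] self_in_closer[OF edge_sym[OF xy]] xy] .
  show "reflect x y v = v" if "v \<in> equidist V E x y" for v
    using that reflect_outside unfolding equidist_def closer_def by simp
  show "{{u, w} | u w. u \<in> closer V E x y \<and> w \<in> closer V E y x \<and> E u w}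
      = {{x', reflect x y x'} | x'. x' \<in> closer V E x y}"
    using reflect_eqI[OF xy] reflect_closer(1,2)[OF xy] by blast
qed

end

theorem theorem3p5:
  fixes V :: "'a set" and E :: "'a \<Rightarrow> 'a \<Rightarrow> bool"
  assumes "finite_simple_graph V E"
    and "connected_graph V E"
    and "min_curv V E > 0"
    and "diam_eff V E = real (max_deg V E) / min_curv V E"
  shows "reflective V E"
proof -
  interpret bonnet_myers_sharp V E
    by unfold_locales (simp_all add: assms)
  show ?thesis unfolding reflective_def using reflection_reflect by blast
qed

end
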